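(* For every $m>0$, the Lévy measure $n^m$ is the push-forward of $n^0$ under $\phi_m$: $n^m(B)=n^0(\{z\in\mathbb{R}^d\setminus\{0\}:\phi_m(z)\in B\})$ for every Borel set $B\subset\mathbb{R}^d\setminus\{0\}$.
   Context: Let $d\ge1$. For $m>0$, $n^m(dy)=n^m(|y|)dy$ on $\mathbb{R}^d\setminus\{0\}$ with $n^m(r)=2\left(\frac{m}{2\pi}\right)^{(d+1)/2}\frac{K_{(d+1)/2}(mr)}{r^{(d+1)/2}}$, where $K_\nu$ is the modified Bessel function of the third kind, and $n^0(dy)=\frac{\Gamma((d+1)/2)}{\pi^{(d+1)/2}}|y|^{-(d+1)}dy$. For $m>0$ and $r>0$ let $l_m(r)=2^{\frac{d-1}{2}}\Gamma(\frac{d+1}{2})\big/\big(m^{\frac{d+1}{2}}\int_r^\infty u^{\frac{d-3}{2}}K_{\frac{d+1}{2}}(mu)\,du\big)$, a strictly increasing bijection of $(0,\infty)$, and $\phi_m(z)=l_m^{-1}(|z|)\frac{z}{|z|}$ for $z\ne0$. *)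

theory Defs
  imports "HOL-Analysis.Analysis"
begin

text \<open>Modified Bessel function of the third kind (Macdonald function), via its
standard integral representation, valid for x > 0:
  K_nu(x) = integral over t in [0,inf) of exp(-x cosh t) cosh(nu t).\<close>
definition besselK :: "real \<Rightarrow> real \<Rightarrow> real" where
  "besselK \<nu> x = (LBINT t:{0..}. exp (- x * cosh t) * cosh (\<nu> * t))"

definition levy_density_m :: "nat \<Rightarrow> real \<Rightarrow> real \<Rightarrow> real" where
  "levy_density_m d m r =
     2 * (m / (2 * pi)) powr ((real d + 1) / 2) * besselK ((real d + 1) / 2) (m * r)
       / r powr ((real d + 1) / 2)"

definition levy_density_0 :: "nat \<Rightarrow> real \<Rightarrow> real" where
  "levy_density_0 d r = Gamma ((real d + 1) / 2) / pi powr ((real d + 1) / 2)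
       * r powr (- (real d + 1))"

definition levy_m :: "real \<Rightarrow> 'a::euclidean_space measure" where
  "levy_m m = density lborel
     (\<lambda>y. if y = 0 then 0 else ennreal (levy_density_m DIM('a) m (norm y)))"

definition levy_0 :: "'a::euclidean_space measure" where
  "levy_0 = density lborel
     (\<lambda>y. if y = 0 then 0 else ennreal (levy_density_0 DIM('a) (norm y)))"

definition l_fun :: "nat \<Rightarrow> real \<Rightarrow> real \<Rightarrow> real" where
  "l_fun d m r = 2 powr ((real d - 1) / 2) * Gamma ((real d + 1) / 2)
     / (m powr ((real d + 1) / 2) *
        (LBINT u:{r<..}. u powr ((real d - 3) / 2) * besselK ((real d + 1) / 2) (m * u)))"

definition phi_fun :: "real \<Rightarrow> 'a::euclidean_space \<Rightarrow> 'a" where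
  "phi_fun m z = (if z = 0 then 0 else
     (inv_into {0<..} (l_fun DIM('a) m) (norm z) / norm z) *\<^sub>R z)"

end

theory Submission
  imports Defs "HOL-Analysis.Analysis"
begin

text \<open>In polar coordinates z = r u both n^m and n^0 are products of one measure on the
unit sphere with a radial measure on (0, \<infinity>), and phi_m only moves the radius, by the increasing
bijection l_m^-1. So it suffices to compare the radial measures, and for those it suffices to
compare tails (x, \<infinity>): the radial part of n^0 gives c_0 / l_m(x), that of n^m gives
c_m * int_x^\<infinity> u^((d-3)/2) K_((d+1)/2)(m u) du, and these agree by the very definition of l_m.
The analytic input is that l_m is an increasing bijection of (0, \<infinity>), which follows from
K_nu(y) = O(e^-y) at infinity and K_nu(y) >= c y^-nu near 0.\<close>

section \<open>Bounds for the Macdonald function\<close>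

lemma borel_measurable_cosh_real [measurable]: "(cosh :: real \<Rightarrow> real) \<in> borel_measurable borel"
  by (rule borel_measurable_continuous_onI) (intro continuous_intros)

lemma borel_measurable_besselK [measurable]: "besselK \<nu> \<in> borel_measurable borel"
  unfolding besselK_def set_lebesgue_integral_def by measurable

definition besselK_nn :: "real \<Rightarrow> real \<Rightarrow> ennreal" where
  "besselK_nn \<nu> y =
     (\<integral>\<^sup>+ t. ennreal (indicator {0..} t * (exp (- y * cosh t) * cosh (\<nu> * t))) \<partial>lborel)"

lemma besselK_eq_enn2real: "besselK \<nu> y = enn2real (besselK_nn \<nu> y)"
  unfolding besselK_def set_lebesgue_integral_def besselK_nn_def real_scaleR_def
  by (rule integral_eq_nn_integral) (auto simp: indicator_def)

lemma besselK_nonneg: "0 \<le> besselK \<nu> y"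
  by (simp add: besselK_eq_enn2real)

lemma cosh_le_exp:
  fixes t :: real
  assumes "0 \<le> t"
  shows "cosh t \<le> exp t"
proof -
  have "exp (- t) \<le> 1" "1 \<le> exp t" using assms by simp_all
  then show ?thesis unfolding cosh_def by simp
qed

lemma exp_le_2_cosh: "exp t / 2 \<le> cosh (t :: real)"
  unfolding cosh_def by (simp add: divide_simps)

lemma one_plus_square_le_cosh:
  fixes t :: real
  assumes "0 \<le> t"
  shows "1 + t^2 / 8 \<le> cosh t"
proof -
  have "(1 + t / 2)^2 \<le> exp (t / 2)^2"
    using exp_ge_add_one_self[of "t / 2"] assms by (intro power_mono) auto
  also have "exp (t / 2)^2 = exp t" by (simp add: power2_eq_square flip: exp_add)
  finally have "(1 + t / 2)^2 \<le> exp t" .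
  moreover have "1 - t \<le> exp (- t)" using exp_ge_add_one_self[of "- t"] by simp
  ultimately show ?thesis unfolding cosh_def by (simp add: power2_eq_square field_simps)
qed

lemma besselK_integrand_le:
  fixes y0 y \<nu> t :: real
  assumes "0 < y0" "y0 \<le> y" "0 \<le> \<nu>" "0 \<le> t"
  shows "exp (- y * cosh t) * cosh (\<nu> * t) \<le> exp (2 * (\<nu> + 1)^2 / y0) * exp (- y) * exp (- 1 * t)"
proof -
  have cosh_\<nu>: "cosh (\<nu> * t) \<le> exp (\<nu> * t)" using assms by (intro cosh_le_exp) auto
  have "y * (1 + t^2 / 8) \<le> y * cosh t"
    using one_plus_square_le_cosh[OF assms(4)] assms by (intro mult_left_mono) auto
  moreover have "y0 * t^2 / 8 \<le> y * t^2 / 8"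
    using assms by (intro divide_right_mono mult_right_mono) auto
  ultimately have cosh_t: "- y * cosh t \<le> - y - y0 * t^2 / 8" by (simp add: algebra_simps)
  \<comment> \<open>completing the square in t\<close>
  have "0 \<le> (y0 * t - 4 * (\<nu> + 1))^2 / (8 * y0)" using assms by simp
  then have square: "- y0 * t^2 / 8 + \<nu> * t \<le> 2 * (\<nu> + 1)^2 / y0 - t"
    using assms by (simp add: power2_eq_square field_simps)
  have "exp (- y * cosh t) * cosh (\<nu> * t) \<le> exp (- y - y0 * t^2 / 8) * exp (\<nu> * t)"
    using cosh_\<nu> cosh_t by (intro mult_mono) auto
  also have "\<dots> = exp (- y + (- y0 * t^2 / 8 + \<nu> * t))" by (simp flip: exp_add)
  also have "\<dots> \<le> exp (- y + (2 * (\<nu> + 1)^2 / y0 - t))" using square by simp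
  also have "\<dots> = exp (2 * (\<nu> + 1)^2 / y0) * exp (- y) * exp (- 1 * t)" by (simp flip: exp_add)
  finally show ?thesis .
qed

lemma nn_integral_Ici_exp_minus:
  fixes C :: real
  assumes "0 \<le> C"
  shows "(\<integral>\<^sup>+ t. ennreal (indicator {0..} t * (C * exp (- 1 * t))) \<partial>lborel) = ennreal C"
proof -
  have "((\<lambda>t. C * exp (- 1 * t)) has_integral C * (exp (- 1 * 0) / 1)) {0..}"
    by (intro has_integral_mult_right has_integral_exp_minus_to_infinity) auto
  from nn_integral_has_integral_lebesgue[OF _ this] assms show ?thesis by simp
qed

lemma besselK_nn_le:
  assumes "0 < y0" "y0 \<le> y" "0 \<le> \<nu>"
  shows "besselK_nn \<nu> y \<le> ennreal (exp (2 * (\<nu> + 1)^2 / y0) * exp (- y))"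
proof -
  have "besselK_nn \<nu> y \<le> (\<integral>\<^sup>+ t. ennreal (indicator {0..} t *
          (exp (2 * (\<nu> + 1)^2 / y0) * exp (- y) * exp (- 1 * t))) \<partial>lborel)"
    unfolding besselK_nn_def
    by (intro nn_integral_mono ennreal_leI)
       (use besselK_integrand_le[OF assms] in \<open>auto simp: indicator_def\<close>)
  also have "\<dots> = ennreal (exp (2 * (\<nu> + 1)^2 / y0) * exp (- y))"
    by (rule nn_integral_Ici_exp_minus) simp
  finally show ?thesis .
qed

lemma ennreal_besselK:
  assumes "0 < y" "0 \<le> \<nu>"
  shows "ennreal (besselK \<nu> y) = besselK_nn \<nu> y"
proof -
  have "besselK_nn \<nu> y \<le> ennreal (exp (2 * (\<nu> + 1)^2 / y) * exp (- y))"
    by (rule besselK_nn_le) (use assms in auto)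
  then have "besselK_nn \<nu> y < \<infinity>" using order.strict_trans1 by fastforce
  then show ?thesis by (simp add: besselK_eq_enn2real less_top)
qed

lemma besselK_le:
  assumes "0 < y0" "y0 \<le> y" "0 \<le> \<nu>"
  shows "besselK \<nu> y \<le> exp (2 * (\<nu> + 1)^2 / y0) * exp (- y)"
proof -
  have "ennreal (besselK \<nu> y) \<le> ennreal (exp (2 * (\<nu> + 1)^2 / y0) * exp (- y))"
    using besselK_nn_le[OF assms] ennreal_besselK[of y \<nu>] assms by simp
  then show ?thesis by (simp add: ennreal_le_iff)
qed

lemma besselK_ge_of_nn_ge:
  assumes "ennreal c \<le> besselK_nn \<nu> y" "0 < y" "0 \<le> \<nu>"
  shows "c \<le> besselK \<nu> y"
  using assms ennreal_besselK[of y \<nu>] besselK_nonneg[of \<nu> y] by (metis ennreal_le_iff)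

lemma besselK_ge_near_0:
  assumes "0 < y" "y \<le> exp (- 1)" "0 \<le> \<nu>"
  shows "exp (- 1 - \<nu>) / 2 * y powr (- \<nu>) \<le> besselK \<nu> y"
proof (rule besselK_ge_of_nn_ge[OF _ assms(1,3)])
  \<comment> \<open>on [T - 1, T] with T = - ln y we have y cosh t \<le> 1 and cosh (\<nu> t) \<ge> exp (\<nu> (T - 1)) / 2\<close>
  define T where "T = - ln y"
  have "ln y \<le> ln (exp (- 1))" using assms by (subst ln_le_cancel_iff) auto
  then have T: "1 \<le> T" unfolding T_def by simp
  have exp_T: "exp T = 1 / y" using assms by (simp add: T_def exp_minus divide_inverse)
  define c where "c = exp (- 1 - \<nu>) / 2 * y powr (- \<nu>)"
  have exp_\<nu>T: "exp (\<nu> * T) = y powr (- \<nu>)" using assms by (simp add: T_def powr_def)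
  have c_le: "c \<le> exp (- y * cosh t) * cosh (\<nu> * t)" if t: "T - 1 \<le> t" "t \<le> T" for t
  proof -
    have "y * cosh t \<le> y * exp t" using cosh_le_exp[of t] t T assms by simp
    also have "\<dots> \<le> y * exp T" using t assms by simp
    also have "\<dots> = 1" using exp_T assms by simp
    finally have y_cosh: "exp (- 1) \<le> exp (- y * cosh t)" by simp
    have "exp (\<nu> * (T - 1)) \<le> exp (\<nu> * t)" using t assms by (simp add: mult_left_mono)
    then have \<nu>_cosh: "exp (\<nu> * (T - 1)) / 2 \<le> cosh (\<nu> * t)"
      using exp_le_2_cosh[of "\<nu> * t"] by linarith
    have "c = exp (- 1) * (exp (\<nu> * (T - 1)) / 2)"
      unfolding c_def exp_\<nu>T[symmetric] by (simp add: exp_add[symmetric] algebra_simps)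
    also have "\<dots> \<le> exp (- y * cosh t) * cosh (\<nu> * t)"
      using y_cosh \<nu>_cosh by (intro mult_mono) auto
    finally show ?thesis .
  qed
  have "ennreal c = (\<integral>\<^sup>+ t. ennreal c * indicator {T - 1..T} t \<partial>lborel)"
    by (simp add: nn_integral_cmult_indicator)
  also have "\<dots> \<le> besselK_nn \<nu> y" unfolding besselK_nn_def
  proof (intro nn_integral_mono)
    fix t
    show "ennreal c * indicator {T - 1..T} t
        \<le> ennreal (indicator {0..} t * (exp (- y * cosh t) * cosh (\<nu> * t)))"
      using c_le[of t] T by (cases "t \<in> {T - 1..T}") (auto simp: indicator_def intro!: ennreal_leI)
  qed
  finally show "ennreal (exp (- 1 - \<nu>) / 2 * y powr (- \<nu>)) \<le> besselK_nn \<nu> y"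
    by (simp add: c_def)
qed

lemma besselK_ge:
  assumes "0 < y" "0 \<le> \<nu>"
  shows "exp (- y * cosh 1) \<le> besselK \<nu> y"
proof (rule besselK_ge_of_nn_ge[OF _ assms])
  have le: "exp (- y * cosh 1) \<le> exp (- y * cosh t) * cosh (\<nu> * t)" if "0 \<le> t" "t \<le> 1" for t
  proof -
    have "exp (- y * cosh 1) \<le> exp (- y * cosh t)"
      using that assms by (simp add: cosh_real_nonneg_le_iff)
    also have "\<dots> \<le> exp (- y * cosh t) * cosh (\<nu> * t)" using cosh_real_ge_1[of "\<nu> * t"] by simp
    finally show ?thesis .
  qed
  have "ennreal (exp (- y * cosh 1))
      = (\<integral>\<^sup>+ t. ennreal (exp (- y * cosh 1)) * indicator {0..1::real} t \<partial>lborel)"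
    by (subst nn_integral_cmult_indicator) auto
  also have "\<dots> \<le> besselK_nn \<nu> y" unfolding besselK_nn_def
    using le by (intro nn_integral_mono) (auto simp: indicator_def intro!: ennreal_leI)
  finally show "ennreal (exp (- y * cosh 1)) \<le> besselK_nn \<nu> y" .
qed

lemma powr_mult_exp_le:
  fixes \<nu> m u :: real
  assumes "0 < \<nu>" "0 < m" "0 < u"
  shows "u powr \<nu> * exp (- m * u) \<le> (\<nu> / (exp 1 * m)) powr \<nu>"
proof -
  define s where "s = m * u / \<nu>"
  have s: "0 < s" using assms by (simp add: s_def)
  have "s \<le> exp (s - 1)" using exp_ge_add_one_self[of "s - 1"] by simp
  then have "exp 1 * s \<le> exp s" by (simp add: exp_diff field_simps)
  then have "(exp 1 * s) powr \<nu> \<le> exp s powr \<nu>" using s assms by (intro powr_mono2) auto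
  also have "exp s powr \<nu> = exp (m * u)" using assms by (simp add: powr_def s_def)
  finally have "(exp 1 * m / \<nu>) powr \<nu> * u powr \<nu> \<le> exp (m * u)"
    using assms by (simp add: s_def powr_mult[symmetric] mult.assoc)
  moreover have "0 < (exp 1 * m / \<nu>) powr \<nu>" using assms by simp
  ultimately have "u powr \<nu> \<le> exp (m * u) / (exp 1 * m / \<nu>) powr \<nu>"
    by (simp add: field_simps)
  also have "\<dots> = exp (m * u) * (\<nu> / (exp 1 * m)) powr \<nu>"
    using assms by (simp add: powr_divide divide_simps)
  finally show ?thesis by (simp add: exp_minus field_simps)
qed

lemma nn_integral_Ioi_powr_minus_2:
  fixes x :: real
  assumes "0 < x"
  shows "(\<integral>\<^sup>+ u. ennreal (indicator {x<..} u * u powr (- 2)) \<partial>lborel) = ennreal (1 / x)"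
proof -
  have "((\<lambda>u. u powr (- 2)) has_integral - (x powr (- 2 + 1)) / (- 2 + 1)) {x..}"
    using assms by (intro has_integral_powr_to_inf) auto
  then have "((\<lambda>u. u powr (- 2)) has_integral 1 / x) {x..}"
    using assms by (simp add: powr_minus divide_inverse)
  then have "((\<lambda>u. u powr (- 2)) has_integral 1 / x) {x<..}"
    by (rule has_integral_spike_set_eq[THEN iffD1, rotated 2])
       (auto intro: negligible_subset[of "{x}"])
  from nn_integral_has_integral_lebesgue[OF _ this] show ?thesis by simp
qed

section \<open>The tail integral of u^(\<nu>-2) K_\<nu>(m u)\<close>

definition besselK_tail_integrand :: "real \<Rightarrow> real \<Rightarrow> real \<Rightarrow> real" where
  "besselK_tail_integrand \<nu> m u = u powr (\<nu> - 2) * besselK \<nu> (m * u)"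

definition besselK_tail_nn :: "real \<Rightarrow> real \<Rightarrow> real \<Rightarrow> ennreal" where
  "besselK_tail_nn \<nu> m x =
     (\<integral>\<^sup>+ u. ennreal (indicator {x<..} u * besselK_tail_integrand \<nu> m u) \<partial>lborel)"

definition besselK_tail :: "real \<Rightarrow> real \<Rightarrow> real \<Rightarrow> real" where
  "besselK_tail \<nu> m x = (LBINT u:{x<..}. besselK_tail_integrand \<nu> m u)"

definition besselK_tail_Ioc :: "real \<Rightarrow> real \<Rightarrow> real \<Rightarrow> real \<Rightarrow> ennreal" where
  "besselK_tail_Ioc \<nu> m x y =
     (\<integral>\<^sup>+ u. ennreal (indicator {x<..y} u * besselK_tail_integrand \<nu> m u) \<partial>lborel)"

definition besselK_tail_const :: "real \<Rightarrow> real \<Rightarrow> real \<Rightarrow> real" where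
  "besselK_tail_const \<nu> m x = exp (2 * (\<nu> + 1)^2 / (m * x)) * (\<nu> / (exp 1 * m)) powr \<nu>"

lemma borel_measurable_besselK_tail_integrand [measurable]:
  "besselK_tail_integrand \<nu> m \<in> borel_measurable borel"
  unfolding besselK_tail_integrand_def by measurable

lemma besselK_tail_integrand_nonneg: "0 \<le> besselK_tail_integrand \<nu> m u"
  by (simp add: besselK_tail_integrand_def besselK_nonneg)

lemma besselK_tail_eq_enn2real: "besselK_tail \<nu> m x = enn2real (besselK_tail_nn \<nu> m x)"
  unfolding besselK_tail_def besselK_tail_nn_def set_lebesgue_integral_def real_scaleR_def
  by (rule integral_eq_nn_integral) (auto simp: besselK_tail_integrand_nonneg)

lemma besselK_tail_nn_split:
  assumes "x \<le> y"
  shows "besselK_tail_nn \<nu> m x = besselK_tail_Ioc \<nu> m x y + besselK_tail_nn \<nu> m y"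
proof -
  have "besselK_tail_nn \<nu> m x = (\<integral>\<^sup>+ u. ennreal (indicator {x<..y} u * besselK_tail_integrand \<nu> m u)
      + ennreal (indicator {y<..} u * besselK_tail_integrand \<nu> m u) \<partial>lborel)"
    unfolding besselK_tail_nn_def using assms
    by (intro nn_integral_cong) (auto simp: indicator_def besselK_tail_integrand_nonneg)
  also have "\<dots> = besselK_tail_Ioc \<nu> m x y + besselK_tail_nn \<nu> m y"
    unfolding besselK_tail_Ioc_def besselK_tail_nn_def by (rule nn_integral_add) auto
  finally show ?thesis .
qed

lemma besselK_tail_Ioc_ge:
  assumes "x \<le> y" "0 \<le> c" "\<And>u. x < u \<Longrightarrow> u \<le> y \<Longrightarrow> c \<le> besselK_tail_integrand \<nu> m u"
  shows "ennreal (c * (y - x)) \<le> besselK_tail_Ioc \<nu> m x y"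
proof -
  have "ennreal (c * (y - x)) = (\<integral>\<^sup>+ u. ennreal c * indicator {x<..y} u \<partial>lborel)"
    using assms by (subst nn_integral_cmult_indicator) (auto simp: ennreal_mult')
  also have "\<dots> \<le> besselK_tail_Ioc \<nu> m x y" unfolding besselK_tail_Ioc_def
    using assms by (intro nn_integral_mono) (auto simp: indicator_def intro!: ennreal_leI)
  finally show ?thesis .
qed

context
  fixes \<nu> m :: real
  assumes \<nu>: "0 < \<nu>" and m: "0 < m"
begin

lemma besselK_tail_const_pos: "0 < besselK_tail_const \<nu> m x"
  using \<nu> m by (simp add: besselK_tail_const_def)

lemma besselK_tail_integrand_le:
  assumes "0 < x" "x \<le> u"
  shows "besselK_tail_integrand \<nu> m u \<le> besselK_tail_const \<nu> m x * u powr (- 2)"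
proof -
  have u: "0 < u" using assms by simp
  have K: "besselK \<nu> (m * u) \<le> exp (2 * (\<nu> + 1)^2 / (m * x)) * exp (- (m * u))"
    using assms m \<nu> by (intro besselK_le) (auto intro: mult_left_mono)
  have "besselK_tail_integrand \<nu> m u
      \<le> u powr (\<nu> - 2) * (exp (2 * (\<nu> + 1)^2 / (m * x)) * exp (- (m * u)))"
    unfolding besselK_tail_integrand_def using K by (intro mult_left_mono) auto
  also have "\<dots> = exp (2 * (\<nu> + 1)^2 / (m * x)) * u powr (- 2) * (u powr \<nu> * exp (- m * u))"
    using u by (simp add: powr_add[symmetric] algebra_simps)
  also have "\<dots> \<le> exp (2 * (\<nu> + 1)^2 / (m * x)) * u powr (- 2) * ((\<nu> / (exp 1 * m)) powr \<nu>)"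
    using powr_mult_exp_le[of \<nu> m u] \<nu> m u by (intro mult_left_mono) auto
  finally show ?thesis by (simp add: besselK_tail_const_def algebra_simps)
qed

lemma besselK_tail_nn_le:
  assumes "0 < x"
  shows "besselK_tail_nn \<nu> m x \<le> ennreal (besselK_tail_const \<nu> m x / x)"
proof -
  have "besselK_tail_nn \<nu> m x \<le> (\<integral>\<^sup>+ u. ennreal (besselK_tail_const \<nu> m x)
      * ennreal (indicator {x<..} u * u powr (- 2)) \<partial>lborel)"
    unfolding besselK_tail_nn_def using besselK_tail_integrand_le assms besselK_tail_const_pos[of x]
    by (intro nn_integral_mono)
       (auto simp: indicator_def simp flip: ennreal_mult intro!: ennreal_leI)
  also have "\<dots> = ennreal (besselK_tail_const \<nu> m x) * ennreal (1 / x)"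
    by (subst nn_integral_cmult) (auto simp: nn_integral_Ioi_powr_minus_2 assms)
  also have "\<dots> = ennreal (besselK_tail_const \<nu> m x / x)"
    using besselK_tail_const_pos[of x] assms by (simp add: ennreal_mult[symmetric] divide_inverse)
  finally show ?thesis .
qed

lemma besselK_tail_nn_finite: "0 < x \<Longrightarrow> besselK_tail_nn \<nu> m x < \<infinity>"
  using besselK_tail_nn_le order.strict_trans1 by fastforce

lemma ennreal_besselK_tail: "0 < x \<Longrightarrow> ennreal (besselK_tail \<nu> m x) = besselK_tail_nn \<nu> m x"
  using besselK_tail_nn_finite by (simp add: besselK_tail_eq_enn2real less_top)

lemma besselK_tail_Ioc_finite:
  assumes "0 < x" "x \<le> y"
  shows "besselK_tail_Ioc \<nu> m x y < \<infinity>"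
  using besselK_tail_nn_split[OF assms(2)] besselK_tail_nn_finite[OF assms(1)] by simp

lemma besselK_tail_Ioc_le:
  assumes "0 < x0" "x0 \<le> x" "x \<le> y"
  shows "besselK_tail_Ioc \<nu> m x y \<le> ennreal (besselK_tail_const \<nu> m x0 * x0 powr (- 2) * (y - x))"
proof -
  let ?C = "besselK_tail_const \<nu> m x0 * x0 powr (- 2)"
  have "besselK_tail_Ioc \<nu> m x y \<le> (\<integral>\<^sup>+ u. ennreal ?C * indicator {x<..y} u \<partial>lborel)"
    unfolding besselK_tail_Ioc_def
  proof (intro nn_integral_mono)
    fix u
    show "ennreal (indicator {x<..y} u * besselK_tail_integrand \<nu> m u)
        \<le> ennreal ?C * indicator {x<..y} u"
    proof (cases "u \<in> {x<..y}")
      case True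
      have "besselK_tail_integrand \<nu> m u \<le> besselK_tail_const \<nu> m x0 * u powr (- 2)"
        using True assms by (intro besselK_tail_integrand_le) auto
      also have "\<dots> \<le> ?C" using True assms besselK_tail_const_pos[of x0]
        by (intro mult_left_mono powr_mono2') auto
      finally show ?thesis using True by (auto intro!: ennreal_leI)
    qed auto
  qed
  also have "\<dots> = ennreal (?C * (y - x))"
    using assms besselK_tail_const_pos[of x0]
    by (subst nn_integral_cmult_indicator) (auto simp: ennreal_mult[symmetric])
  finally show ?thesis .
qed

lemma besselK_tail_Ioc_pos:
  assumes "0 < x" "x < y"
  shows "0 < besselK_tail_Ioc \<nu> m x y"
proof -
  define c where "c = min (x powr (\<nu> - 2)) (y powr (\<nu> - 2)) * exp (- (m * y) * cosh 1)"
  have c: "0 < c" using assms by (simp add: c_def)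
  have "c \<le> besselK_tail_integrand \<nu> m u" if u: "x < u" "u \<le> y" for u
  proof -
    have "min (x powr (\<nu> - 2)) (y powr (\<nu> - 2)) \<le> u powr (\<nu> - 2)"
    proof (cases "\<nu> - 2 \<ge> 0")
      case True
      then show ?thesis using u assms by (intro min.coboundedI1 powr_mono2) auto
    next
      case False
      then show ?thesis using u assms by (intro min.coboundedI2 powr_mono2') auto
    qed
    moreover have "exp (- (m * y) * cosh 1) \<le> besselK \<nu> (m * u)"
    proof -
      have "exp (- (m * y) * cosh 1) \<le> exp (- (m * u) * cosh 1)"
        using u m cosh_real_ge_1[of 1] by (simp add: mult_right_mono)
      also have "\<dots> \<le> besselK \<nu> (m * u)" using u assms m \<nu> by (intro besselK_ge) auto
      finally show ?thesis .
    qed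
    ultimately show ?thesis
      unfolding c_def besselK_tail_integrand_def using assms by (intro mult_mono) auto
  qed
  then have "ennreal (c * (y - x)) \<le> besselK_tail_Ioc \<nu> m x y"
    using c assms by (intro besselK_tail_Ioc_ge) auto
  moreover have "0 < ennreal (c * (y - x))" using c assms by simp
  ultimately show ?thesis by order
qed

lemma besselK_tail_nn_ge_near_0:
  assumes "0 < x" "x \<le> exp (- 1) / (2 * m)"
  shows "ennreal (exp (- 1 - \<nu>) / 2 * m powr (- \<nu>) / (4 * x)) \<le> besselK_tail_nn \<nu> m x"
proof -
  define c where "c = exp (- 1 - \<nu>) / 2 * m powr (- \<nu>) * (2 * x) powr (- 2)"
  have "c \<le> besselK_tail_integrand \<nu> m u" if u: "x < u" "u \<le> 2 * x" for u
  proof -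
    have u0: "0 < u" using u assms by simp
    have "m * u \<le> m * (2 * x)" using u m by (intro mult_left_mono) auto
    also have "\<dots> \<le> exp (- 1)" using assms m by (simp add: field_simps)
    finally have "exp (- 1 - \<nu>) / 2 * (m * u) powr (- \<nu>) \<le> besselK \<nu> (m * u)"
      using u0 m \<nu> by (intro besselK_ge_near_0) auto
    moreover have "c \<le> exp (- 1 - \<nu>) / 2 * m powr (- \<nu>) * u powr (- 2)"
      unfolding c_def using u u0 by (intro mult_left_mono powr_mono2') auto
    moreover have "exp (- 1 - \<nu>) / 2 * m powr (- \<nu>) * u powr (- 2)
        = u powr (\<nu> - 2) * (exp (- 1 - \<nu>) / 2 * (m * u) powr (- \<nu>))"
      using u0 m by (simp add: powr_mult powr_add[symmetric] algebra_simps)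
    ultimately show ?thesis
      unfolding besselK_tail_integrand_def by (metis mult_left_mono order_trans powr_ge_zero)
  qed
  then have "ennreal (c * (2 * x - x)) \<le> besselK_tail_Ioc \<nu> m x (2 * x)"
    using assms by (intro besselK_tail_Ioc_ge) (auto simp: c_def)
  also have "\<dots> \<le> besselK_tail_nn \<nu> m x" using besselK_tail_nn_split[of x "2 * x"] assms by simp
  also have "c * (2 * x - x) = exp (- 1 - \<nu>) / 2 * m powr (- \<nu>) / (4 * x)"
    using assms by (simp add: c_def powr_minus power2_eq_square powr_numeral field_simps)
  finally show ?thesis .
qed

lemma besselK_tail_diff:
  assumes "0 < x" "x \<le> y"
  shows "besselK_tail \<nu> m x = enn2real (besselK_tail_Ioc \<nu> m x y) + besselK_tail \<nu> m y"
proof -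
  have "ennreal (besselK_tail \<nu> m x) = besselK_tail_Ioc \<nu> m x y + ennreal (besselK_tail \<nu> m y)"
    using besselK_tail_nn_split[OF assms(2)] assms by (simp add: ennreal_besselK_tail)
  also have "besselK_tail_Ioc \<nu> m x y = ennreal (enn2real (besselK_tail_Ioc \<nu> m x y))"
    using besselK_tail_Ioc_finite[OF assms] by (simp add: less_top)
  finally show ?thesis
    by (simp add: ennreal_plus[symmetric] besselK_tail_eq_enn2real del: ennreal_plus)
qed

lemma besselK_tail_less:
  assumes "0 < x" "x < y"
  shows "besselK_tail \<nu> m y < besselK_tail \<nu> m x"
proof -
  have "0 < enn2real (besselK_tail_Ioc \<nu> m x y)"
    using besselK_tail_Ioc_pos[OF assms] besselK_tail_Ioc_finite[of x y] assms
    by (simp add: enn2real_positive_iff)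
  then show ?thesis using besselK_tail_diff[of x y] assms by simp
qed

lemma besselK_tail_pos:
  assumes "0 < x"
  shows "0 < besselK_tail \<nu> m x"
proof -
  have "0 \<le> besselK_tail \<nu> m (x + 1)" by (simp add: besselK_tail_eq_enn2real)
  also have "\<dots> < besselK_tail \<nu> m x" using assms by (intro besselK_tail_less) auto
  finally show ?thesis .
qed

lemma besselK_tail_diff_le:
  assumes "0 < x0" "x0 \<le> x" "x \<le> y"
  shows "besselK_tail \<nu> m x - besselK_tail \<nu> m y \<le> besselK_tail_const \<nu> m x0 * x0 powr (- 2) * (y - x)"
proof -
  have "enn2real (besselK_tail_Ioc \<nu> m x y)
      \<le> enn2real (ennreal (besselK_tail_const \<nu> m x0 * x0 powr (- 2) * (y - x)))"
    using besselK_tail_Ioc_le[OF assms] by (intro enn2real_mono) auto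
  then show ?thesis
    using besselK_tail_diff[of x y] assms besselK_tail_const_pos[of x0] by simp
qed

lemma continuous_on_besselK_tail: "continuous_on {0<..} (besselK_tail \<nu> m)"
proof (subst continuous_on_eq_continuous_at, simp, intro ballI)
  fix p :: real
  assume "p \<in> {0<..}"
  then have p: "0 < p" by simp
  define L where "L = besselK_tail_const \<nu> m (p / 2) * (p / 2) powr (- 2)"
  have L: "0 \<le> L" unfolding L_def using besselK_tail_const_pos[of "p / 2"] by simp
  have "dist (besselK_tail \<nu> m x) (besselK_tail \<nu> m y) \<le> L * dist x y"
    if xy: "x \<in> {p / 2<..}" "y \<in> {p / 2<..}" "x \<le> y" for x y
  proof -
    have "0 \<le> besselK_tail \<nu> m x - besselK_tail \<nu> m y"
      using besselK_tail_diff[of x y] xy p by (simp add: besselK_tail_eq_enn2real)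
    moreover have "besselK_tail \<nu> m x - besselK_tail \<nu> m y \<le> L * (y - x)"
      unfolding L_def using besselK_tail_diff_le[of "p / 2" x y] xy p by simp
    ultimately show ?thesis using xy by (simp add: dist_real_def)
  qed
  then have "L-lipschitz_on {p / 2<..} (besselK_tail \<nu> m)"
    by (intro lipschitz_onI[OF _ L]) (metis dist_commute linear)
  then have "continuous_on {p / 2<..} (besselK_tail \<nu> m)" by (rule lipschitz_on_continuous_on)
  then show "isCont (besselK_tail \<nu> m) p"
    using p by (subst (asm) continuous_on_eq_continuous_at) auto
qed

lemma besselK_tail_tendsto_0: "(besselK_tail \<nu> m \<longlongrightarrow> 0) at_top"
proof (rule tendsto_sandwich)
  show "\<forall>\<^sub>F x in at_top. 0 \<le> besselK_tail \<nu> m x" by (simp add: besselK_tail_eq_enn2real)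
  show "\<forall>\<^sub>F x in at_top. besselK_tail \<nu> m x \<le> besselK_tail_const \<nu> m 1 / x"
    using eventually_ge_at_top[of "1::real"]
  proof eventually_elim
    case (elim x)
    have "besselK_tail \<nu> m x \<le> enn2real (ennreal (besselK_tail_const \<nu> m x / x))"
      unfolding besselK_tail_eq_enn2real using besselK_tail_nn_le[of x] elim
      by (intro enn2real_mono) auto
    also have "\<dots> = besselK_tail_const \<nu> m x / x" using elim besselK_tail_const_pos[of x] by simp
    also have "\<dots> \<le> besselK_tail_const \<nu> m 1 / x"
    proof -
      have "2 * (\<nu> + 1)^2 / (m * x) \<le> 2 * (\<nu> + 1)^2 / (m * 1)"
        using elim m by (intro divide_left_mono mult_left_mono) auto
      then have "besselK_tail_const \<nu> m x \<le> besselK_tail_const \<nu> m 1"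
        unfolding besselK_tail_const_def by (intro mult_right_mono) auto
      then show ?thesis using elim by (intro divide_right_mono) auto
    qed
    finally show ?case .
  qed
  show "((\<lambda>x. besselK_tail_const \<nu> m 1 / x) \<longlongrightarrow> 0) at_top" by real_asymp
qed simp

lemma besselK_tail_at_right_0: "filterlim (besselK_tail \<nu> m) at_top (at_right 0)"
proof (rule filterlim_at_top_mono)
  define k where "k = exp (- 1 - \<nu>) / 2 * m powr (- \<nu>) / 4"
  have k: "0 < k" unfolding k_def using m by simp
  show "filterlim (\<lambda>x. k / x) at_top (at_right 0)" using k by real_asymp
  have "\<forall>\<^sub>F x in at_right 0. 0 < x \<and> x \<le> exp (- 1) / (2 * m)"
    using m by (intro eventually_conj eventually_at_right_less)
      (auto simp: eventually_at_right_field intro!: exI[of _ "exp (- 1) / (2 * m)"])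
  then show "\<forall>\<^sub>F x in at_right 0. k / x \<le> besselK_tail \<nu> m x"
  proof eventually_elim
    case (elim x)
    have "ennreal (k / x) \<le> besselK_tail_nn \<nu> m x"
      using besselK_tail_nn_ge_near_0[of x] elim unfolding k_def by (simp add: field_simps)
    then show ?case
      using ennreal_besselK_tail[of x] besselK_tail_pos[of x] elim by (metis ennreal_le_iff less_imp_le)
  qed
qed

end

section \<open>Increasing bijections of (0, \<infinity>)\<close>

lemma bij_betw_Ioi_if_strict_mono_on:
  fixes g :: "real \<Rightarrow> real"
  assumes mono: "strict_mono_on {0<..} g" and cont: "continuous_on {0<..} g"
    and at_0: "(g \<longlongrightarrow> 0) (at_right 0)" and at_top: "filterlim g at_top at_top"
  shows "bij_betw g {0<..} {0<..}"
proof (rule bij_betw_imageI)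
  show "inj_on g {0<..}" using mono by (rule strict_mono_on_imp_inj_on)
  have pos: "0 < g x" if x: "0 < x" for x
  proof -
    have "\<forall>\<^sub>F y in at_right 0. g y \<le> g (x / 2)"
      unfolding eventually_at_right_field using x
      by (intro exI[of _ "x / 2"]) (auto intro: strict_mono_on_leD[OF mono])
    then have "0 \<le> g (x / 2)" using at_0 by (intro tendsto_upperbound) auto
    also have "g (x / 2) < g x" using x by (intro strict_mono_onD[OF mono]) auto
    finally show ?thesis .
  qed
  show "g ` {0<..} = {0<..}"
  proof (intro equalityI subsetI)
    fix v :: real
    assume "v \<in> {0<..}"
    then have v: "0 < v" by simp
    have "\<forall>\<^sub>F y in at_right 0. g y < v" using order_tendstoD(2)[OF at_0 v] .
    then obtain b where "0 < b" "\<And>y. 0 < y \<Longrightarrow> y < b \<Longrightarrow> g y < v"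
      by (auto simp: eventually_at_right_field)
    then have x1: "0 < b / 2" "g (b / 2) < v" by auto
    have "\<forall>\<^sub>F y in at_top. b / 2 \<le> y \<and> v < g y"
      using eventually_ge_at_top[of "b / 2"] at_top
      by (intro eventually_conj) (auto simp: filterlim_at_top_dense)
    then obtain x2 where x2: "b / 2 \<le> x2" "v < g x2"
      by (auto simp: eventually_at_top_linorder)
    have "continuous_on {b / 2..x2} g" using x1 by (intro continuous_on_subset[OF cont]) auto
    then obtain x where "b / 2 \<le> x" "x \<le> x2" "g x = v"
      using IVT'[of g "b / 2" v x2] x1 x2 by auto
    then show "v \<in> g ` {0<..}" using x1 by force
  qed (use pos in auto)
qed

text \<open>The inverse is extended by 0 outside (0, \<infinity>) so that it is monotone on all of \<real>.\<close>

definition inv_Ioi :: "(real \<Rightarrow> real) \<Rightarrow> real \<Rightarrow> real" where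
  "inv_Ioi g r = (if 0 < r then inv_into {0<..} g r else 0)"

context
  fixes g :: "real \<Rightarrow> real"
  assumes bij: "bij_betw g {0<..} {0<..}" and mono: "strict_mono_on {0<..} g"
begin

lemma inv_Ioi_pos_iff: "0 < inv_Ioi g r \<longleftrightarrow> 0 < r"
  using inv_into_into[of r g "{0<..}"] bij by (auto simp: inv_Ioi_def bij_betw_def)

lemma f_inv_Ioi_f: "0 < r \<Longrightarrow> g (inv_Ioi g r) = r"
  using f_inv_into_f[of r g "{0<..}"] bij by (auto simp: inv_Ioi_def bij_betw_def)

lemma inv_Ioi_less_iff:
  assumes "0 < r" "0 < x"
  shows "x < inv_Ioi g r \<longleftrightarrow> g x < r"
  using strict_mono_on_less[OF mono, of x "inv_Ioi g r"] assms
  by (simp add: inv_Ioi_pos_iff f_inv_Ioi_f)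

lemma mono_inv_Ioi: "mono (inv_Ioi g)"
proof
  fix r s :: real
  assume "r \<le> s"
  show "inv_Ioi g r \<le> inv_Ioi g s"
  proof (cases "0 < r")
    case True
    then show ?thesis
      using \<open>r \<le> s\<close> strict_mono_on_less_eq[OF mono, of "inv_Ioi g r" "inv_Ioi g s"]
      by (simp add: inv_Ioi_pos_iff f_inv_Ioi_f)
  next
    case False
    then show ?thesis using inv_Ioi_pos_iff[of s] by (auto simp: inv_Ioi_def)
  qed
qed

lemma borel_measurable_inv_Ioi [measurable]: "inv_Ioi g \<in> borel_measurable borel"
  by (rule borel_measurable_mono[OF mono_inv_Ioi])

lemma vimage_inv_Ioi_greaterThan:
  assumes "0 < x"
  shows "inv_Ioi g -` {x<..} = {g x<..}"
proof (intro equalityI subsetI)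
  fix r
  assume "r \<in> inv_Ioi g -` {x<..}"
  then have "x < inv_Ioi g r" by simp
  moreover have r: "0 < r" using calculation assms inv_Ioi_pos_iff[of r] by linarith
  ultimately show "r \<in> {g x<..}" using inv_Ioi_less_iff[OF r assms] by simp
next
  fix r
  assume "r \<in> {g x<..}"
  moreover have "0 < g x" using bij assms by (auto simp: bij_betw_def)
  ultimately show "r \<in> inv_Ioi g -` {x<..}" using inv_Ioi_less_iff[of r x] assms by simp
qed

end

context
  fixes \<nu> m c :: real
  assumes \<nu>: "0 < \<nu>" and m: "0 < m" and c: "0 < c"
begin

lemma strict_mono_on_div_besselK_tail: "strict_mono_on {0<..} (\<lambda>x. c / besselK_tail \<nu> m x)"
proof (rule strict_mono_onI)
  fix x y :: real
  assume "x \<in> {0<..}" "y \<in> {0<..}" "x < y"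
  then show "c / besselK_tail \<nu> m x < c / besselK_tail \<nu> m y"
    using besselK_tail_less[OF \<nu> m] besselK_tail_pos[OF \<nu> m] c
    by (intro divide_strict_left_mono) auto
qed

lemma bij_betw_div_besselK_tail: "bij_betw (\<lambda>x. c / besselK_tail \<nu> m x) {0<..} {0<..}"
proof (rule bij_betw_Ioi_if_strict_mono_on[OF strict_mono_on_div_besselK_tail])
  show "continuous_on {0<..} (\<lambda>x. c / besselK_tail \<nu> m x)"
    using besselK_tail_pos[OF \<nu> m]
    by (intro continuous_intros continuous_on_besselK_tail[OF \<nu> m]) (metis greaterThan_iff less_irrefl)
  show "((\<lambda>x. c / besselK_tail \<nu> m x) \<longlongrightarrow> 0) (at_right 0)"
    by (intro tendsto_divide_0[OF tendsto_const] filterlim_at_top_imp_at_infinity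
        besselK_tail_at_right_0[OF \<nu> m])
  have "\<forall>\<^sub>F x in at_top. 0 < besselK_tail \<nu> m x"
    using eventually_gt_at_top[of 0] by eventually_elim (rule besselK_tail_pos[OF \<nu> m])
  then have "filterlim (\<lambda>x. c * inverse (besselK_tail \<nu> m x)) at_top at_top"
    by (intro filterlim_tendsto_pos_mult_at_top[OF tendsto_const c]
        filterlim_inverse_at_top besselK_tail_tendsto_0[OF \<nu> m])
  then show "filterlim (\<lambda>x. c / besselK_tail \<nu> m x) at_top at_top"
    by (simp add: divide_inverse)
qed

end

lemma l_fun_eq_div_besselK_tail:
  "l_fun d m = (\<lambda>r. 2 powr ((real d - 1) / 2) * Gamma ((real d + 1) / 2) / m powr ((real d + 1) / 2)
     / besselK_tail ((real d + 1) / 2) m r)"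
proof -
  have exponent: "(real d - 3) / 2 = (real d + 1) / 2 - 2" by (simp add: field_simps)
  show ?thesis
    unfolding l_fun_def besselK_tail_def besselK_tail_integrand_def exponent by (simp add: fun_eq_iff)
qed

context
  fixes d :: nat and m :: real
  assumes m: "0 < m"
begin

lemma strict_mono_on_l_fun: "strict_mono_on {0<..} (l_fun d m)"
  unfolding l_fun_eq_div_besselK_tail using m
  by (intro strict_mono_on_div_besselK_tail) auto

lemma bij_betw_l_fun: "bij_betw (l_fun d m) {0<..} {0<..}"
  unfolding l_fun_eq_div_besselK_tail using m
  by (intro bij_betw_div_besselK_tail) auto

end

lemma phi_fun_eq: "phi_fun m z = inv_Ioi (l_fun DIM('a) m) (norm z) *\<^sub>R sgn (z :: 'a::euclidean_space)"
  by (simp add: phi_fun_def inv_Ioi_def sgn_div_norm divide_inverse)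

section \<open>Polar coordinates\<close>

lemma measure_eqI_atMost:
  fixes M N :: "real measure"
  assumes sets: "sets M = sets borel" "sets N = sets borel"
    and fin: "\<And>x. emeasure M {..x} < \<infinity>"
    and eq: "\<And>x. emeasure M {..x} = emeasure N {..x}"
  shows "M = N"
proof (rule measure_eqI_generator_eq_countable)
  let ?LT = "\<lambda>a::real. {..a}"
  show "Int_stable (range ?LT)" by (auto simp: Int_stable_def)
  show "range ?LT \<subseteq> Pow UNIV" "sets M = sigma_sets UNIV (range ?LT)"
    "sets N = sigma_sets UNIV (range ?LT)"
    unfolding sets borel_eq_atMost by auto
  show "?LT ` \<rat> \<subseteq> range ?LT" "(\<Union>i\<in>\<rat>. ?LT i) = UNIV" "\<And>a. a \<in> ?LT ` \<rat> \<Longrightarrow> emeasure M a \<noteq> \<infinity>"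
    using fin by (auto intro: Rats_no_top_le simp: less_top)
qed (auto intro: eq countable_rat)

text \<open>The radial part of Lebesgue measure on \<real>^d; the factor d matches the normalisation of
  \<open>sphere_measure\<close> below as the image of the unit ball (rather than surface measure).\<close>

definition radial_measure :: "nat \<Rightarrow> real measure" where
  "radial_measure d = density lborel (\<lambda>r. ennreal (if 0 < r then real d * r ^ (d - 1) else 0))"

definition sphere_measure :: "'a::euclidean_space measure" where
  "sphere_measure = distr (density lborel (indicator (cball 0 1))) borel sgn"

lemma sets_radial_measure [simp, measurable_cong]: "sets (radial_measure d) = sets borel"
  by (simp add: radial_measure_def)

lemma space_radial_measure [simp]: "space (radial_measure d) = UNIV"
  by (simp add: radial_measure_def)

lemma sets_sphere_measure [simp, measurable_cong]: "sets sphere_measure = sets borel"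
  by (simp add: sphere_measure_def)

lemma emeasure_radial_measure_atMost:
  assumes "1 \<le> d"
  shows "emeasure (radial_measure d) {..b} = ennreal (if 0 < b then b ^ d else 0)"
proof (cases "0 < b")
  case True
  have "((\<lambda>r. real d * r ^ (d - 1)) has_integral (b ^ d - 0 ^ d)) {0..b}"
    using True
    by (intro fundamental_theorem_of_calculus)
       (auto intro!: derivative_eq_intros simp flip: has_real_derivative_iff_has_vector_derivative)
  then have "((\<lambda>r. real d * r ^ (d - 1)) has_integral b ^ d) {0<..b}"
    using assms
    by (subst has_integral_spike_set_eq[where T="{0..b}"])
       (auto intro: negligible_subset[of "{0}"] simp: power_0_left)
  from nn_integral_has_integral_lebesgue[OF _ this] True
  have "(\<integral>\<^sup>+ r. ennreal (indicator {0<..b} r * (real d * r ^ (d - 1))) \<partial>lborel) = ennreal (b ^ d)"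
    by simp
  moreover have "emeasure (radial_measure d) {..b}
      = (\<integral>\<^sup>+ r. ennreal (indicator {0<..b} r * (real d * r ^ (d - 1))) \<partial>lborel)"
    unfolding radial_measure_def
    by (subst emeasure_density) (auto intro!: nn_integral_cong simp: indicator_def)
  ultimately show ?thesis using True by simp
next
  case False
  then have "(\<lambda>r. ennreal (if 0 < r then real d * r ^ (d - 1) else 0) * indicator {..b} r) = (\<lambda>_. 0)"
    by (auto simp: fun_eq_iff indicator_def)
  then show ?thesis
    using False unfolding radial_measure_def by (subst emeasure_density) auto
qed

lemma sigma_finite_radial_measure:
  assumes "1 \<le> d"
  shows "sigma_finite_measure (radial_measure d)"
proof
  show "\<exists>A. countable A \<and> A \<subseteq> sets (radial_measure d) \<and> \<Union> A = space (radial_measure d)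
      \<and> (\<forall>a\<in>A. emeasure (radial_measure d) a \<noteq> \<infinity>)"
    by (intro exI[of _ "range (\<lambda>n::nat. {..real n})"])
       (auto simp: emeasure_radial_measure_atMost[OF assms] intro: real_arch_simple)
qed

lemma emeasure_sphere_measure:
  assumes [measurable]: "A \<in> sets borel"
  shows "emeasure (sphere_measure :: 'a::euclidean_space measure) A
    = emeasure lborel {z::'a. norm z \<le> 1 \<and> sgn z \<in> A}"
proof -
  have "emeasure (sphere_measure :: 'a measure) A
      = emeasure (density lborel (indicator (cball (0::'a) 1))) (sgn -` A)"
    unfolding sphere_measure_def by (subst emeasure_distr) auto
  also have "\<dots> = emeasure lborel (cball 0 1 \<inter> sgn -` A)"
    by (rule emeasure_restricted) (use measurable_sets[OF borel_measurable_sgn assms] in auto)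
  also have "cball (0::'a) 1 \<inter> sgn -` A = {z. norm z \<le> 1 \<and> sgn z \<in> A}" by auto
  finally show ?thesis .
qed

lemma finite_measure_sphere_measure: "finite_measure (sphere_measure :: 'a::euclidean_space measure)"
proof (rule finite_measureI)
  have "emeasure (sphere_measure :: 'a measure) (space sphere_measure)
      = emeasure lborel {z::'a. norm z \<le> 1 \<and> sgn z \<in> UNIV}"
    by (subst emeasure_sphere_measure) (auto simp: sphere_measure_def)
  also have "{z::'a. norm z \<le> 1 \<and> sgn z \<in> UNIV} = cball 0 1" by auto
  finally show "emeasure (sphere_measure :: 'a measure) (space sphere_measure) \<noteq> \<infinity>"
    using emeasure_lborel_cball_finite[of "0::'a" 1] by simp
qed

lemma emeasure_lborel_cone_scaleR:
  fixes A :: "'a::euclidean_space set"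
  assumes [measurable]: "A \<in> sets borel" and b: "0 < b"
  shows "emeasure lborel {z::'a. norm z \<le> b \<and> sgn z \<in> A}
    = ennreal (b ^ DIM('a)) * emeasure lborel {z::'a. norm z \<le> 1 \<and> sgn z \<in> A}"
proof -
  let ?X = "{z::'a. norm z \<le> b \<and> sgn z \<in> A}" and ?s = "\<lambda>x::'a. 0 + b *\<^sub>R x"
  have [measurable]: "?X \<in> sets borel" by measurable
  have "emeasure lborel ?X = emeasure (density (distr lborel borel ?s) (\<lambda>_. ennreal (\<bar>b\<bar> ^ DIM('a)))) ?X"
    using lborel_affine[of b "0::'a"] b by simp
  also have "\<dots> = ennreal (b ^ DIM('a)) * emeasure (distr lborel borel ?s) ?X"
    using b by (subst emeasure_density) (auto simp: nn_integral_cmult_indicator)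
  also have "emeasure (distr lborel borel ?s) ?X = emeasure lborel (?s -` ?X)"
    by (subst emeasure_distr) auto
  also have "?s -` ?X = {z::'a. norm z \<le> 1 \<and> sgn z \<in> A}"
    using b by (auto simp: sgn_scaleR)
  finally show ?thesis .
qed

lemma emeasure_lborel_cone_atMost:
  fixes A :: "'a::euclidean_space set"
  assumes [measurable]: "A \<in> sets borel"
  shows "emeasure lborel {z::'a. norm z \<le> b \<and> sgn z \<in> A}
    = emeasure (radial_measure DIM('a)) {..b} * emeasure sphere_measure A"
proof (cases "0 < b")
  case True
  then show ?thesis using emeasure_lborel_cone_scaleR[OF assms True]
    by (simp add: emeasure_radial_measure_atMost emeasure_sphere_measure)
next
  case False
  have "{z::'a. norm z \<le> b \<and> sgn z \<in> A} \<subseteq> {0}"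
  proof
    fix x
    assume "x \<in> {z::'a. norm z \<le> b \<and> sgn z \<in> A}"
    then have "norm x \<le> b" by simp
    then have "norm x \<le> 0" using False by linarith
    then show "x \<in> {0}" by simp
  qed
  then have "emeasure lborel {z::'a. norm z \<le> b \<and> sgn z \<in> A} \<le> emeasure lborel {0::'a}"
    by (intro emeasure_mono) auto
  then have "emeasure lborel {z::'a. norm z \<le> b \<and> sgn z \<in> A} = 0" by simp
  then show ?thesis using False by (simp add: emeasure_radial_measure_atMost)
qed

lemma emeasure_lborel_cone:
  fixes A :: "'a::euclidean_space set"
  assumes [measurable]: "A \<in> sets borel" "I \<in> sets borel"
  shows "emeasure lborel {z::'a. norm z \<in> I \<and> sgn z \<in> A}
    = emeasure (radial_measure DIM('a)) I * emeasure sphere_measure A"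
proof -
  \<comment> \<open>both sides are measures in I, which agree on the half-lines {..b}\<close>
  define M :: "real measure" where "M = distr (density lborel (indicator (sgn -` A :: 'a set))) borel norm"
  define N :: "real measure" where "N = density (radial_measure DIM('a)) (\<lambda>_. emeasure sphere_measure A)"
  have [measurable]: "(sgn -` A :: 'a set) \<in> sets borel"
    using measurable_sets[OF borel_measurable_sgn assms(1)] by simp
  have M: "emeasure M J = emeasure lborel {z::'a. norm z \<in> J \<and> sgn z \<in> A}"
    if [measurable]: "J \<in> sets borel" for J
  proof -
    have "emeasure M J = emeasure (density lborel (indicator (sgn -` A :: 'a set))) (norm -` J)"
      unfolding M_def by (subst emeasure_distr) auto
    also have "\<dots> = emeasure lborel ((sgn -` A) \<inter> norm -` J)"
      by (rule emeasure_restricted) (use measurable_sets[OF borel_measurable_norm that] in auto)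
    also have "(sgn -` A) \<inter> norm -` J = {z::'a. norm z \<in> J \<and> sgn z \<in> A}" by auto
    finally show ?thesis .
  qed
  have N: "emeasure N J = emeasure (radial_measure DIM('a)) J * emeasure sphere_measure A"
    if [measurable]: "J \<in> sets borel" for J
  proof -
    have "emeasure N J = (\<integral>\<^sup>+ x. emeasure sphere_measure A * indicator J x \<partial>radial_measure DIM('a))"
      unfolding N_def by (subst emeasure_density) (auto simp: mult.commute)
    also have "\<dots> = emeasure sphere_measure A * emeasure (radial_measure DIM('a)) J"
      by (rule nn_integral_cmult_indicator) simp
    finally show ?thesis by (simp add: mult.commute)
  qed
  have fin: "emeasure sphere_measure A < \<infinity>"
    using finite_measure.emeasure_finite[OF finite_measure_sphere_measure, of A] by (simp add: less_top)
  have "M = N"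
  proof (rule measure_eqI_atMost)
    show "sets M = sets borel" "sets N = sets borel" by (simp_all add: M_def N_def)
    fix x :: real
    have M_atMost: "emeasure M {..x} = emeasure (radial_measure DIM('a)) {..x} * emeasure sphere_measure A"
      using emeasure_lborel_cone_atMost[OF assms(1), of x] by (simp add: M)
    then show "emeasure M {..x} < \<infinity>"
      using fin by (simp add: emeasure_radial_measure_atMost ennreal_mult_less_top)
    show "emeasure M {..x} = emeasure N {..x}" using M_atMost by (simp add: N)
  qed
  then show ?thesis using M[OF assms(2)] N[OF assms(2)] by simp
qed

lemma distr_lborel_polar:
  "distr lborel (radial_measure DIM('a) \<Otimes>\<^sub>M sphere_measure) (\<lambda>z::'a::euclidean_space. (norm z, sgn z))
    = radial_measure DIM('a) \<Otimes>\<^sub>M (sphere_measure :: 'a measure)"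
  (is "?P = _")
proof (rule pair_measure_eqI[symmetric])
  show "sigma_finite_measure (radial_measure DIM('a))"
    by (rule sigma_finite_radial_measure) simp
  interpret finite_measure "sphere_measure :: 'a measure" by (rule finite_measure_sphere_measure)
  show "sigma_finite_measure (sphere_measure :: 'a measure)" ..
  fix I :: "real set" and A :: "'a set"
  assume "I \<in> sets (radial_measure DIM('a))" "A \<in> sets sphere_measure"
  then have [measurable]: "I \<in> sets borel" "A \<in> sets borel" by simp_all
  have "emeasure ?P (I \<times> A) = emeasure lborel ((\<lambda>z::'a. (norm z, sgn z)) -` (I \<times> A))"
    by (subst emeasure_distr) auto
  also have "(\<lambda>z::'a. (norm z, sgn z)) -` (I \<times> A) = {z. norm z \<in> I \<and> sgn z \<in> A}" by auto
  also have "emeasure lborel \<dots> = emeasure (radial_measure DIM('a)) I * emeasure sphere_measure A"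
    by (rule emeasure_lborel_cone) auto
  finally show "emeasure (radial_measure DIM('a)) I * emeasure sphere_measure A = emeasure ?P (I \<times> A)" ..
qed simp

lemma nn_integral_polar:
  fixes F :: "real \<times> 'a::euclidean_space \<Rightarrow> ennreal"
  assumes [measurable]: "F \<in> borel_measurable (borel \<Otimes>\<^sub>M borel)"
  shows "(\<integral>\<^sup>+ z. F (norm z, sgn z) \<partial>(lborel :: 'a measure))
    = (\<integral>\<^sup>+ u. (\<integral>\<^sup>+ r. F (r, u) \<partial>radial_measure DIM('a)) \<partial>sphere_measure)"
proof -
  interpret R: sigma_finite_measure "radial_measure DIM('a)"
    by (rule sigma_finite_radial_measure) simp
  interpret S: finite_measure "sphere_measure :: 'a measure" by (rule finite_measure_sphere_measure)
  interpret pair_sigma_finite "radial_measure DIM('a)" "sphere_measure :: 'a measure" ..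
  have [measurable]: "F \<in> borel_measurable (radial_measure DIM('a) \<Otimes>\<^sub>M (sphere_measure :: 'a measure))"
    by (simp cong: measurable_cong_sets)
  have "(\<integral>\<^sup>+ z. F (norm z, sgn z) \<partial>(lborel :: 'a measure))
      = (\<integral>\<^sup>+ p. F p \<partial>distr lborel (radial_measure DIM('a) \<Otimes>\<^sub>M (sphere_measure :: 'a measure))
          (\<lambda>z::'a. (norm z, sgn z)))"
    by (subst nn_integral_distr) auto
  also have "\<dots> = (\<integral>\<^sup>+ p. F p \<partial>(radial_measure DIM('a) \<Otimes>\<^sub>M (sphere_measure :: 'a measure)))"
    by (simp only: distr_lborel_polar)
  also have "\<dots> = (\<integral>\<^sup>+ u. (\<integral>\<^sup>+ r. F (r, u) \<partial>radial_measure DIM('a)) \<partial>sphere_measure)"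
    by (rule nn_integral_snd[symmetric]) measurable
  finally show ?thesis .
qed

section \<open>Measures on \<real> vanishing on (-\<infinity>, 0] are determined by their tails\<close>

lemma sets_borel_eq_sigma_sets_greaterThan_pos:
  "sets borel = sigma_sets UNIV ({{x<..} | x::real. 0 < x} \<union> {S \<in> sets borel. S \<subseteq> {..0}})"
  (is "_ = sigma_sets UNIV ?E")
proof
  show "sigma_sets UNIV ?E \<subseteq> sets borel"
    by (rule sets.sigma_sets_subset[of _ borel, simplified]) auto
next
  interpret E: sigma_algebra UNIV "sigma_sets UNIV ?E" by (rule sigma_algebra_sigma_sets) simp
  have "{0<..} = (\<Union>n. {inverse (real (Suc n))<..})"
  proof (intro equalityI subsetI)
    fix x :: real
    assume "x \<in> {0<..}"
    then obtain n where "inverse (real (Suc n)) < x" using reals_Archimedean by auto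
    then show "x \<in> (\<Union>n. {inverse (real (Suc n))<..})" by auto
  next
    fix x :: real
    assume "x \<in> (\<Union>n. {inverse (real (Suc n))<..})"
    then obtain n where "inverse (real (Suc n)) < x" by auto
    moreover have "0 < inverse (real (Suc n))" by simp
    ultimately have "0 < x" by linarith
    then show "x \<in> {0<..}" by simp
  qed
  also have "\<dots> \<in> sigma_sets UNIV ?E"
    by (intro E.countable_UN') (auto intro!: sigma_sets.Basic)
  finally have pos: "{0<..} \<in> sigma_sets UNIV ?E" .
  have "{a<..} \<in> sigma_sets UNIV ?E" for a :: real
  proof (cases "0 < a")
    case True
    then show ?thesis by (intro sigma_sets.Basic) auto
  next
    case False
    then have "{a<..} = {a<..0} \<union> {0<..}" by auto
    also have "\<dots> \<in> sigma_sets UNIV ?E" by (intro E.Un[OF sigma_sets.Basic pos]) auto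
    finally show ?thesis .
  qed
  then have "sigma_sets UNIV (range greaterThan) \<subseteq> sigma_sets UNIV ?E"
    by (intro E.sigma_sets_subset) auto
  moreover have "sets (borel :: real measure) = sigma_sets UNIV (range greaterThan)"
    by (simp add: borel_Ioi)
  ultimately show "sets borel \<subseteq> sigma_sets UNIV ?E" by simp
qed

lemma measure_eqI_greaterThan_pos:
  fixes M N :: "real measure"
  assumes sets: "sets M = sets borel" "sets N = sets borel"
    and nonpos: "\<And>S. S \<in> sets borel \<Longrightarrow> S \<subseteq> {..0} \<Longrightarrow> emeasure M S = 0 \<and> emeasure N S = 0"
    and fin: "\<And>x. 0 < x \<Longrightarrow> emeasure M {x<..} < \<infinity>"
    and eq: "\<And>x. 0 < x \<Longrightarrow> emeasure M {x<..} = emeasure N {x<..}"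
  shows "M = N"
proof -
  define E where "E = {{x<..} | x::real. 0 < x} \<union> {S \<in> sets borel. S \<subseteq> {..0}}"
  define A where "A = insert {..0} ((\<lambda>q::real. {q<..}) ` (\<rat> \<inter> {0<..}))"
  have Int_stable: "Int_stable E"
  proof (rule Int_stableI)
    fix a b
    assume a: "a \<in> E" and b: "b \<in> E"
    then have borel: "a \<in> sets borel" "b \<in> sets borel" by (auto simp: E_def)
    show "a \<inter> b \<in> E"
    proof (cases "a \<subseteq> {..0} \<or> b \<subseteq> {..0}")
      case True
      then have "a \<inter> b \<subseteq> {..0}" by blast
      then show ?thesis using borel by (simp add: E_def)
    next
      case False
      then obtain x y where "0 < x" "a = {x<..}" "0 < y" "b = {y<..}"
        using a b unfolding E_def by blast
      then have "a \<inter> b = {max x y<..}" "0 < max x y" by auto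
      then show ?thesis unfolding E_def by blast
    qed
  qed
  have A_cover: "\<Union> A = UNIV"
  proof -
    have "x \<in> \<Union> A" for x :: real
    proof (cases "0 < x")
      case True
      then obtain q where "q \<in> \<rat>" "0 < q" "q < x" using Rats_dense_in_real by blast
      then show ?thesis unfolding A_def by blast
    next
      case False
      then show ?thesis unfolding A_def by simp
    qed
    then show ?thesis by blast
  qed
  show ?thesis
  proof (rule measure_eqI_generator_eq_countable[OF Int_stable _ _ _ _ _ A_cover])
    show "sets M = sigma_sets UNIV E" "sets N = sigma_sets UNIV E"
      using sets sets_borel_eq_sigma_sets_greaterThan_pos by (simp_all add: E_def)
    show "E \<subseteq> Pow UNIV" by simp
    have "{..0} \<in> E" "\<And>q. 0 < q \<Longrightarrow> {q<..} \<in> E" by (auto simp: E_def)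
    then show "A \<subseteq> E" unfolding A_def by auto
    show "countable A" unfolding A_def by (simp add: countable_rat)
    show "emeasure M a \<noteq> \<infinity>" if "a \<in> A" for a
    proof -
      from that consider "a = {..0}" | q where "0 < q" "a = {q<..}" unfolding A_def by blast
      then show ?thesis
      proof cases
        case 1
        then show ?thesis using nonpos[of "{..0}"] by simp
      next
        case (2 q)
        then show ?thesis using fin[of q] by (simp add: less_top)
      qed
    qed
    show "emeasure M X = emeasure N X" if "X \<in> E" for X
    proof -
      from that consider x where "0 < x" "X = {x<..}" | "X \<in> sets borel" "X \<subseteq> {..0}"
        unfolding E_def by blast
      then show ?thesis by cases (simp_all add: eq nonpos)
    qed
  qed
qed

lemma scaleR_norm_sgn: "norm z *\<^sub>R sgn z = (z :: 'a::real_normed_vector)"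
  by (cases "z = 0") (simp_all add: sgn_div_norm)

lemma density_lborel_norm_eq_distr:
  fixes W0 W1 :: "real \<Rightarrow> ennreal" and h :: "real \<Rightarrow> real"
  assumes [measurable]: "W0 \<in> borel_measurable borel" "W1 \<in> borel_measurable borel"
    "h \<in> borel_measurable borel"
    and radial: "density (radial_measure DIM('a)) W1 = distr (density (radial_measure DIM('a)) W0) borel h"
  shows "density lborel (\<lambda>z::'a::euclidean_space. W1 (norm z))
    = distr (density lborel (\<lambda>z::'a. W0 (norm z))) borel (\<lambda>z. h (norm z) *\<^sub>R sgn z)"
proof (rule measure_eqI)
  fix B :: "'a set"
  assume "B \<in> sets (density lborel (\<lambda>z::'a. W1 (norm z)))"
  then have [measurable]: "B \<in> sets borel" by simp
  let ?R = "radial_measure DIM('a)"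
  have [measurable]: "(\<lambda>z::'a. h (norm z) *\<^sub>R sgn z) -` B \<in> sets borel"
    by (rule measurable_sets_borel[of _ borel]) auto
  have radial_integral: "(\<integral>\<^sup>+ r. W1 r * indicator B (r *\<^sub>R u) \<partial>?R)
      = (\<integral>\<^sup>+ r. W0 r * indicator B (h r *\<^sub>R u) \<partial>?R)" for u :: 'a
  proof -
    have "(\<integral>\<^sup>+ r. W1 r * indicator B (r *\<^sub>R u) \<partial>?R) = (\<integral>\<^sup>+ r. indicator B (r *\<^sub>R u) \<partial>density ?R W1)"
      by (simp add: nn_integral_density)
    also have "\<dots> = (\<integral>\<^sup>+ r. indicator B (r *\<^sub>R u) \<partial>distr (density ?R W0) borel h)"
      by (simp only: radial)
    also have "\<dots> = (\<integral>\<^sup>+ r. W0 r * indicator B (h r *\<^sub>R u) \<partial>?R)"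
      by (simp add: nn_integral_distr nn_integral_density)
    finally show ?thesis .
  qed
  have "emeasure (density lborel (\<lambda>z::'a. W1 (norm z))) B
      = (\<integral>\<^sup>+ z. (\<lambda>(r, u). W1 r * indicator B (r *\<^sub>R u)) (norm z, sgn z) \<partial>lborel)"
    by (subst emeasure_density) (auto simp: scaleR_norm_sgn)
  also have "\<dots> = (\<integral>\<^sup>+ u. (\<integral>\<^sup>+ r. W1 r * indicator B (r *\<^sub>R u) \<partial>?R) \<partial>sphere_measure)"
    by (subst nn_integral_polar) auto
  also have "\<dots> = (\<integral>\<^sup>+ u. (\<integral>\<^sup>+ r. W0 r * indicator B (h r *\<^sub>R u) \<partial>?R) \<partial>sphere_measure)"
    by (simp only: radial_integral)
  also have "\<dots> = (\<integral>\<^sup>+ z. (\<lambda>(r, u). W0 r * indicator B (h r *\<^sub>R u)) (norm z, sgn z) \<partial>lborel)"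
    by (subst nn_integral_polar) auto
  also have "\<dots> = emeasure (distr (density lborel (\<lambda>z::'a. W0 (norm z))) borel
      (\<lambda>z. h (norm z) *\<^sub>R sgn z)) B"
    by (subst emeasure_distr, simp_all, subst emeasure_density) (auto simp: indicator_def)
  finally show "emeasure (density lborel (\<lambda>z::'a. W1 (norm z))) B = \<dots>" .
qed simp

section \<open>The radial parts of the L\'evy measures\<close>

definition levy_radial_m :: "nat \<Rightarrow> real \<Rightarrow> real \<Rightarrow> ennreal" where
  "levy_radial_m d m r = (if r = 0 then 0 else ennreal (levy_density_m d m r))"

definition levy_radial_0 :: "nat \<Rightarrow> real \<Rightarrow> ennreal" where
  "levy_radial_0 d r = (if r = 0 then 0 else ennreal (levy_density_0 d r))"

lemma levy_m_eq_density_norm: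
  "levy_m m = density lborel (\<lambda>z::'a::euclidean_space. levy_radial_m DIM('a) m (norm z))"
  by (simp add: levy_m_def levy_radial_m_def)

lemma levy_0_eq_density_norm:
  "levy_0 = density lborel (\<lambda>z::'a::euclidean_space. levy_radial_0 DIM('a) (norm z))"
  by (simp add: levy_0_def levy_radial_0_def)

lemma borel_measurable_levy_density_m [measurable]: "levy_density_m d m \<in> borel_measurable borel"
  unfolding levy_density_m_def by measurable

lemma borel_measurable_levy_density_0 [measurable]: "levy_density_0 d \<in> borel_measurable borel"
  unfolding levy_density_0_def by measurable

lemma borel_measurable_levy_radial_m [measurable]: "levy_radial_m d m \<in> borel_measurable borel"
  unfolding levy_radial_m_def by measurable

lemma borel_measurable_levy_radial_0 [measurable]: "levy_radial_0 d \<in> borel_measurable borel"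
  unfolding levy_radial_0_def by measurable

lemma emeasure_density_radial_measure_nonpos:
  assumes [measurable]: "W \<in> borel_measurable borel" "S \<in> sets borel" and "S \<subseteq> {..0}"
  shows "emeasure (density (radial_measure d) W) S = 0"
proof -
  have "(\<lambda>r. ennreal (if 0 < r then real d * r ^ (d - 1) else 0) * (W r * indicator S r)) = (\<lambda>_. 0)"
    using assms(3) by (auto simp: fun_eq_iff indicator_def)
  then show ?thesis
    unfolding radial_measure_def by (subst emeasure_density) (auto simp: nn_integral_density)
qed

lemma emeasure_density_radial_measure_greaterThan:
  fixes w f :: "real \<Rightarrow> real"
  assumes [measurable]: "w \<in> borel_measurable borel" "f \<in> borel_measurable borel"
    and "0 \<le> x" "0 \<le> c"
    and w_nonneg: "\<And>r. 0 < r \<Longrightarrow> 0 \<le> w r" and f_nonneg: "\<And>r. 0 < r \<Longrightarrow> 0 \<le> f r"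
    and radial: "\<And>r. 0 < r \<Longrightarrow> real d * r ^ (d - 1) * w r = c * f r"
  shows "emeasure (density (radial_measure d) (\<lambda>r. if r = 0 then 0 else ennreal (w r))) {x<..}
    = ennreal c * (\<integral>\<^sup>+ r. ennreal (indicator {x<..} r * f r) \<partial>lborel)"
proof -
  have "emeasure (density (radial_measure d) (\<lambda>r. if r = 0 then 0 else ennreal (w r))) {x<..}
      = (\<integral>\<^sup>+ r. ennreal (if 0 < r then real d * r ^ (d - 1) else 0)
          * ((if r = 0 then 0 else ennreal (w r)) * indicator {x<..} r) \<partial>lborel)"
    unfolding radial_measure_def by (subst emeasure_density) (auto simp: nn_integral_density)
  also have "\<dots> = (\<integral>\<^sup>+ r. ennreal c * ennreal (indicator {x<..} r * f r) \<partial>lborel)"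
  proof (intro nn_integral_cong)
    fix r :: real
    show "ennreal (if 0 < r then real d * r ^ (d - 1) else 0)
        * ((if r = 0 then 0 else ennreal (w r)) * indicator {x<..} r)
      = ennreal c * ennreal (indicator {x<..} r * f r)"
    proof (cases "x < r")
      case True
      then have r: "0 < r" using \<open>0 \<le> x\<close> by simp
      have "ennreal (real d * r ^ (d - 1)) * ennreal (w r) = ennreal (c * f r)"
        using radial[OF r] w_nonneg[OF r] r by (simp add: ennreal_mult[symmetric])
      then show ?thesis using True r \<open>0 \<le> c\<close> f_nonneg[OF r] by (simp add: ennreal_mult)
    qed simp
  qed
  also have "\<dots> = ennreal c * (\<integral>\<^sup>+ r. ennreal (indicator {x<..} r * f r) \<partial>lborel)"
    by (rule nn_integral_cmult) simp
  finally show ?thesis .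
qed

context
  fixes d :: nat and m :: real
  assumes d: "1 \<le> d" and m: "0 < m"
begin

lemma radial_levy_density_m:
  assumes r: "0 < r"
  shows "real d * r ^ (d - 1) * levy_density_m d m r
    = (2 * real d * (m / (2 * pi)) powr ((real d + 1) / 2))
      * besselK_tail_integrand ((real d + 1) / 2) m r"
proof -
  define \<nu> where "\<nu> = (real d + 1) / 2"
  have power: "r ^ (d - 1) = r powr (real d - 1)"
    using powr_realpow[OF r, of "d - 1"] d by (simp add: of_nat_diff)
  have "real d - 1 = (\<nu> - 2) + \<nu>" by (simp add: \<nu>_def field_simps)
  then have exponent: "r powr (real d - 1) / r powr \<nu> = r powr (\<nu> - 2)"
    using r by (simp only: powr_add) simp
  have "real d * r ^ (d - 1) * levy_density_m d m r
      = (2 * real d * (m / (2 * pi)) powr \<nu>) * (r powr (real d - 1) / r powr \<nu>) * besselK \<nu> (m * r)"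
    unfolding levy_density_m_def power \<nu>_def[symmetric] by simp
  then show ?thesis unfolding \<nu>_def[symmetric] exponent besselK_tail_integrand_def by simp
qed

lemma radial_levy_density_0:
  assumes r: "0 < r"
  shows "real d * r ^ (d - 1) * levy_density_0 d r
    = (real d * Gamma ((real d + 1) / 2) / pi powr ((real d + 1) / 2)) * r powr (- 2)"
proof -
  define \<nu> where "\<nu> = (real d + 1) / 2"
  have power: "r ^ (d - 1) = r powr (real d - 1)"
    using powr_realpow[OF r, of "d - 1"] d by (simp add: of_nat_diff)
  have exponent: "r powr (real d - 1) * r powr (- (real d + 1)) = r powr (- 2)"
    using r by (simp add: powr_add[symmetric])
  have "real d * r ^ (d - 1) * levy_density_0 d r
      = (real d * Gamma \<nu> / pi powr \<nu>) * (r powr (real d - 1) * r powr (- (real d + 1)))"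
    unfolding levy_density_0_def power \<nu>_def[symmetric] by simp
  then show ?thesis unfolding \<nu>_def[symmetric] exponent .
qed

lemma emeasure_levy_radial_m_greaterThan:
  assumes x: "0 < x"
  shows "emeasure (density (radial_measure d) (levy_radial_m d m)) {x<..}
    = ennreal (2 * real d * (m / (2 * pi)) powr ((real d + 1) / 2)
        * besselK_tail ((real d + 1) / 2) m x)"
proof -
  define \<nu> where "\<nu> = (real d + 1) / 2"
  have \<nu>: "0 < \<nu>" by (simp add: \<nu>_def)
  define c where "c = 2 * real d * (m / (2 * pi)) powr \<nu>"
  have "emeasure (density (radial_measure d) (levy_radial_m d m)) {x<..}
      = ennreal c * besselK_tail_nn \<nu> m x"
    unfolding levy_radial_m_def besselK_tail_nn_def
  proof (rule emeasure_density_radial_measure_greaterThan)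
    show "0 \<le> levy_density_m d m r" if "0 < r" for r
      using that m by (simp add: levy_density_m_def besselK_nonneg)
    show "real d * r ^ (d - 1) * levy_density_m d m r = c * besselK_tail_integrand \<nu> m r"
      if "0 < r" for r
      using radial_levy_density_m[OF that] by (simp add: c_def \<nu>_def)
  qed (use x in \<open>simp_all add: c_def besselK_tail_integrand_nonneg\<close>)
  also have "\<dots> = ennreal c * ennreal (besselK_tail \<nu> m x)"
    by (simp only: ennreal_besselK_tail[OF \<nu> m x])
  also have "\<dots> = ennreal (c * besselK_tail \<nu> m x)"
    using besselK_tail_pos[OF \<nu> m x] m by (intro ennreal_mult[symmetric]) (simp_all add: c_def)
  finally show ?thesis by (simp only: c_def \<nu>_def)
qed

lemma emeasure_levy_radial_0_greaterThan:
  assumes y: "0 < y"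
  shows "emeasure (density (radial_measure d) (levy_radial_0 d)) {y<..}
    = ennreal (real d * Gamma ((real d + 1) / 2) / pi powr ((real d + 1) / 2) / y)"
proof -
  define c where "c = real d * Gamma ((real d + 1) / 2) / pi powr ((real d + 1) / 2)"
  have "emeasure (density (radial_measure d) (levy_radial_0 d)) {y<..}
      = ennreal c * (\<integral>\<^sup>+ r. ennreal (indicator {y<..} r * r powr (- 2)) \<partial>lborel)"
    unfolding levy_radial_0_def
  proof (rule emeasure_density_radial_measure_greaterThan)
    show "real d * r ^ (d - 1) * levy_density_0 d r = c * r powr (- 2)" if "0 < r" for r
      using radial_levy_density_0[OF that] by (simp add: c_def)
  qed (use y in \<open>simp_all add: c_def levy_density_0_def\<close>)
  also have "\<dots> = ennreal c * ennreal (1 / y)" by (simp only: nn_integral_Ioi_powr_minus_2[OF y])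
  also have "\<dots> = ennreal (c / y)"
    using y by (subst ennreal_mult[symmetric]) (simp_all add: c_def)
  finally show ?thesis by (simp only: c_def)
qed

lemma levy_constants:
  "2 * real d * (m / (2 * pi)) powr ((real d + 1) / 2)
      * (2 powr ((real d - 1) / 2) * Gamma ((real d + 1) / 2))
    = real d * Gamma ((real d + 1) / 2) / pi powr ((real d + 1) / 2) * m powr ((real d + 1) / 2)"
proof -
  define \<nu> where "\<nu> = (real d + 1) / 2"
  have "(real d - 1) / 2 = \<nu> - 1" by (simp add: \<nu>_def field_simps)
  moreover have "2 powr (\<nu> - 1) = 2 powr \<nu> / 2" by (simp add: powr_diff)
  moreover have "(m / (2 * pi)) powr \<nu> = m powr \<nu> / (2 powr \<nu> * pi powr \<nu>)"
    using m by (simp add: powr_divide powr_mult)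
  ultimately show ?thesis unfolding \<nu>_def[symmetric] by (simp only:) (simp add: field_simps)
qed

lemma density_levy_radial_m_eq_distr:
  "density (radial_measure d) (levy_radial_m d m)
    = distr (density (radial_measure d) (levy_radial_0 d)) borel (inv_Ioi (l_fun d m))"
proof -
  note inv_l = bij_betw_l_fun[OF m] strict_mono_on_l_fun[OF m]
  note [measurable] = borel_measurable_inv_Ioi[OF inv_l]
  let ?N\<^sub>m = "density (radial_measure d) (levy_radial_m d m)"
  let ?N\<^sub>0 = "density (radial_measure d) (levy_radial_0 d)"
  show ?thesis
  proof (rule measure_eqI_greaterThan_pos)
    fix S :: "real set"
    assume [measurable]: "S \<in> sets borel" and S: "S \<subseteq> {..0}"
    have "inv_Ioi (l_fun d m) -` S \<subseteq> {..0}"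
      using S inv_Ioi_pos_iff[OF inv_l] by (fastforce simp: not_less[symmetric])
    moreover have "inv_Ioi (l_fun d m) -` S \<in> sets borel"
      by (rule measurable_sets_borel[OF borel_measurable_inv_Ioi[OF inv_l]]) simp
    ultimately show "emeasure ?N\<^sub>m S = 0 \<and> emeasure (distr ?N\<^sub>0 borel (inv_Ioi (l_fun d m))) S = 0"
      using S by (simp add: emeasure_distr emeasure_density_radial_measure_nonpos)
  next
    fix x :: real
    assume x: "0 < x"
    define \<nu> where "\<nu> = (real d + 1) / 2"
    define A where "A = 2 powr ((real d - 1) / 2) * Gamma \<nu>"
    define c\<^sub>m where "c\<^sub>m = 2 * real d * (m / (2 * pi)) powr \<nu>"
    define c\<^sub>0 where "c\<^sub>0 = real d * Gamma \<nu> / pi powr \<nu>"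
    have l: "0 < l_fun d m x" using bij_betw_l_fun[OF m] x by (auto simp: bij_betw_def)
    have "0 < A" by (simp add: A_def \<nu>_def)
    have "c\<^sub>0 / l_fun d m x = c\<^sub>0 * m powr \<nu> * besselK_tail \<nu> m x / A"
      unfolding l_fun_eq_div_besselK_tail A_def \<nu>_def by simp
    also have "c\<^sub>0 * m powr \<nu> = c\<^sub>m * A"
      using levy_constants by (simp add: c\<^sub>0_def c\<^sub>m_def A_def \<nu>_def)
    finally have "c\<^sub>0 / l_fun d m x = c\<^sub>m * besselK_tail \<nu> m x" using \<open>0 < A\<close> by simp
    then show "emeasure ?N\<^sub>m {x<..} = emeasure (distr ?N\<^sub>0 borel (inv_Ioi (l_fun d m))) {x<..}"
      by (simp add: emeasure_distr vimage_inv_Ioi_greaterThan[OF inv_l x] c\<^sub>0_def c\<^sub>m_def \<nu>_def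
          emeasure_levy_radial_m_greaterThan[OF x] emeasure_levy_radial_0_greaterThan[OF l])
    show "emeasure ?N\<^sub>m {x<..} < \<infinity>"
      by (simp add: emeasure_levy_radial_m_greaterThan[OF x])
  qed simp_all
qed

end

theorem mainTheorem7:
  fixes m :: real and B :: "'a::euclidean_space set"
  assumes "m > 0" and "B \<in> sets borel" and "B \<subseteq> UNIV - {0}"
  shows "emeasure (levy_m m) B
           = emeasure (levy_0 :: 'a measure) {z \<in> UNIV - {0}. phi_fun m z \<in> B}"
proof -
  note inv_l = bij_betw_l_fun[OF assms(1)] strict_mono_on_l_fun[OF assms(1)]
  let ?\<psi> = "\<lambda>z::'a. inv_Ioi (l_fun DIM('a) m) (norm z) *\<^sub>R sgn z"
  have \<psi>: "?\<psi> \<in> measurable (levy_0 :: 'a measure) borel"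
    using borel_measurable_inv_Ioi[OF inv_l] unfolding levy_0_def by measurable
  have "levy_m m = distr (levy_0 :: 'a measure) borel ?\<psi>"
    unfolding levy_m_eq_density_norm levy_0_eq_density_norm
    using borel_measurable_inv_Ioi[OF inv_l] density_levy_radial_m_eq_distr[of "DIM('a)" m] assms(1)
    by (intro density_lborel_norm_eq_distr) simp_all
  then have "emeasure (levy_m m) B = emeasure (levy_0 :: 'a measure) (?\<psi> -` B)"
    using emeasure_distr[OF \<psi> assms(2)] by (simp add: levy_0_def)
  also have "?\<psi> -` B = {z \<in> UNIV - {0}. phi_fun m z \<in> B}"
    using assms(3) by (auto simp: phi_fun_eq)
  finally show ?thesis .
qed

end
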